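(* Consider $n$ agents, where agent $i$ has a private type $t_i\in[0,\infty)$ and additive valuation $v_i(t_i,S)=t_i+w_i(S)$ for winning sets $S\ni i$ (and $v_i(t_i,S)=0$ for $S\not\ni i$), with publicly known $w_i$. Then an allocation rule $\mathcal{A}:[0,\infty)^n\to2^{[n]}$ can be truthfully implemented if and only if it is monotone: for every agent $i$, every $b_{-i}$ and every $b_i'\ge b_i$, $i\in\mathcal{A}(b_{-i},b_i)$ implies $i\in\mathcal{A}(b_{-i},b_i')$.
   Context: $\mathcal{A}$ can be truthfully implemented if there exist payment functions $p_i$, with $p_i(b)=0$ whenever $i\notin\mathcal{A}(b)$, such that for every $i$, every $b_{-i}$ and all $t_i,b_i\in[0,\infty)$: $v_i(t_i,\mathcal{A}(b_{-i},t_i))-p_i(b_{-i},t_i)\ge v_i(t_i,\mathcal{A}(b_{-i},b_i))-p_i(b_{-i},b_i)$. *)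

theory Defs
  imports Complex_Main
begin

definition nonneg_profile :: "('n \<Rightarrow> real) \<Rightarrow> bool" where
  "nonneg_profile b \<longleftrightarrow> (\<forall>j. b j \<ge> 0)"

definition add_val :: "('n \<Rightarrow> 'n set \<Rightarrow> real) \<Rightarrow> 'n \<Rightarrow> real \<Rightarrow> 'n set \<Rightarrow> real" where
  "add_val w i t S = (if i \<in> S then t + w i S else 0)"

definition truthfully_implementable ::
  "('n \<Rightarrow> real \<Rightarrow> 'n set \<Rightarrow> real) \<Rightarrow> (('n \<Rightarrow> real) \<Rightarrow> 'n set) \<Rightarrow> bool" where
  "truthfully_implementable v A \<longleftrightarrow>
     (\<exists>p :: 'n \<Rightarrow> ('n \<Rightarrow> real) \<Rightarrow> real.
        (\<forall>i b. nonneg_profile b \<longrightarrow> i \<notin> A b \<longrightarrow> p i b = 0) \<and>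
        (\<forall>i b t bi. nonneg_profile b \<longrightarrow> t \<ge> 0 \<longrightarrow> bi \<ge> 0 \<longrightarrow>
           v i t (A (b(i := t))) - p i (b(i := t))
             \<ge> v i t (A (b(i := bi))) - p i (b(i := bi))))"

definition monotone_alloc :: "(('n \<Rightarrow> real) \<Rightarrow> 'n set) \<Rightarrow> bool" where
  "monotone_alloc A \<longleftrightarrow>
     (\<forall>i b bi bi'. nonneg_profile b \<longrightarrow> 0 \<le> bi \<longrightarrow> bi \<le> bi' \<longrightarrow>
        i \<in> A (b(i := bi)) \<longrightarrow> i \<in> A (b(i := bi')))"

end

theory Submission
  imports Defs
begin

text \<open>Monotone rules are implemented by threshold prices: a winner pays the infimum \<open>\<theta>\<close> of
  the bids with which it would still win, plus its public value \<open>w\<^sub>i(S)\<close>. By monotonicity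
  agent \<open>i\<close> wins exactly when its bid exceeds \<open>\<theta>\<close> (up to the boundary), so its utility
  \<open>t\<^sub>i - \<theta>\<close> when winning, \<open>0\<close> when losing, is maximised by bidding \<open>t\<^sub>i\<close>.
  Conversely, adding the incentive constraints for true types \<open>b\<^sub>i \<le> b\<^sub>i'\<close> in both
  directions shows that winning at \<open>b\<^sub>i\<close> and losing at \<open>b\<^sub>i'\<close> forces \<open>b\<^sub>i' \<le> b\<^sub>i\<close>.\<close>

definition threshold_bid :: "(('n \<Rightarrow> real) \<Rightarrow> 'n set) \<Rightarrow> 'n \<Rightarrow> ('n \<Rightarrow> real) \<Rightarrow> real" where
  "threshold_bid A i b = Inf {x. 0 \<le> x \<and> i \<in> A (b(i := x))}"

definition threshold_payment ::
  "('n \<Rightarrow> 'n set \<Rightarrow> real) \<Rightarrow> (('n \<Rightarrow> real) \<Rightarrow> 'n set) \<Rightarrow> 'n \<Rightarrow> ('n \<Rightarrow> real) \<Rightarrow> real" where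
  "threshold_payment w A i b = (if i \<in> A b then threshold_bid A i b + w i (A b) else 0)"

lemma threshold_bid_fun_upd [simp]: "threshold_bid A i (b(i := t)) = threshold_bid A i b"
  by (simp add: threshold_bid_def)

lemma threshold_bid_le_winning_bid:
  assumes "0 \<le> x" "i \<in> A (b(i := x))"
  shows "threshold_bid A i b \<le> x"
  unfolding threshold_bid_def
  by (rule cInf_lower) (use assms in \<open>auto intro: bdd_belowI[where m = 0]\<close>)

lemma monotone_alloc_wins_above_threshold:
  assumes M: "monotone_alloc A" and b: "nonneg_profile b"
    and "threshold_bid A i b < x" and "0 \<le> y" "i \<in> A (b(i := y))"
  shows "i \<in> A (b(i := x))"
proof -
  have "{x. 0 \<le> x \<and> i \<in> A (b(i := x))} \<noteq> {}"
    using assms by auto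
  from cInf_lessD[OF this] obtain z where "0 \<le> z" "i \<in> A (b(i := z))" "z < x"
    using assms(3) unfolding threshold_bid_def by auto
  with M b show ?thesis
    unfolding monotone_alloc_def by (meson less_imp_le)
qed

lemma monotone_alloc_imp_truthfully_implementable:
  fixes A :: "('n \<Rightarrow> real) \<Rightarrow> 'n set"
  assumes M: "monotone_alloc A"
  shows "truthfully_implementable (add_val w) A"
  unfolding truthfully_implementable_def
proof (intro exI[of _ "threshold_payment w A"] conjI allI impI)
  fix i and b :: "'n \<Rightarrow> real"
  assume "i \<notin> A b"
  then show "threshold_payment w A i b = 0"
    by (simp add: threshold_payment_def)
next
  fix i and b :: "'n \<Rightarrow> real" and t bi :: real
  assume b: "nonneg_profile b" and t: "0 \<le> t" and bi: "0 \<le> bi"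
  let ?u = "\<lambda>x. add_val w i t (A (b(i := x))) - threshold_payment w A i (b(i := x))"
  show "?u bi \<le> ?u t"
  proof (cases "i \<in> A (b(i := t))")
    case True
    then have "threshold_bid A i b \<le> t"
      using t by (rule threshold_bid_le_winning_bid[rotated])
    with True show ?thesis
      by (auto simp: threshold_payment_def add_val_def)
  next
    case lose_t: False
    show ?thesis
    proof (cases "i \<in> A (b(i := bi))")
      case True
      then have "t \<le> threshold_bid A i b"
        using monotone_alloc_wins_above_threshold[OF M b _ bi] lose_t by force
      with True lose_t show ?thesis
        by (auto simp: threshold_payment_def add_val_def)
    next
      case False
      with lose_t show ?thesis
        by (simp add: threshold_payment_def add_val_def)
    qed
  qed
qed

lemma truthful_win_lose_bid_le:
  assumes T: "truthfully_implementable (add_val w) A" and b: "nonneg_profile b"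
    and bi: "0 \<le> bi" "bi \<le> bi'"
    and win: "i \<in> A (b(i := bi))" and lose: "i \<notin> A (b(i := bi'))"
  shows "bi' \<le> bi"
proof -
  from T obtain p where
    loser_pays_nothing: "\<And>i b. nonneg_profile b \<Longrightarrow> i \<notin> A b \<Longrightarrow> p i b = 0" and
    IC: "\<And>i b t bi. nonneg_profile b \<Longrightarrow> 0 \<le> t \<Longrightarrow> 0 \<le> bi \<Longrightarrow>
           add_val w i t (A (b(i := bi))) - p i (b(i := bi))
             \<le> add_val w i t (A (b(i := t))) - p i (b(i := t))"
    unfolding truthfully_implementable_def by blast
  have "nonneg_profile (b(i := bi'))"
    using b bi by (simp add: nonneg_profile_def)
  then have "p i (b(i := bi')) = 0"
    using lose by (rule loser_pays_nothing)
  moreover have "add_val w i bi' (A (b(i := bi))) - p i (b(i := bi))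
      \<le> add_val w i bi' (A (b(i := bi'))) - p i (b(i := bi'))"
    using IC[OF b] bi by simp
  moreover have "add_val w i bi (A (b(i := bi'))) - p i (b(i := bi'))
      \<le> add_val w i bi (A (b(i := bi))) - p i (b(i := bi))"
    using IC[OF b] bi by simp
  ultimately show ?thesis
    using win lose by (simp add: add_val_def)
qed

lemma truthfully_implementable_imp_monotone_alloc:
  assumes "truthfully_implementable (add_val w) A"
  shows "monotone_alloc A"
  unfolding monotone_alloc_def
proof (intro allI impI)
  fix i b bi bi'
  assume b: "nonneg_profile b" and bi: "0 \<le> bi" "bi \<le> bi'" and win: "i \<in> A (b(i := bi))"
  show "i \<in> A (b(i := bi'))"
  proof (rule ccontr)
    assume lose: "i \<notin> A (b(i := bi'))"
    with truthful_win_lose_bid_le[OF assms b bi win] have "bi' = bi"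
      using bi(2) by linarith
    with win lose show False
      by simp
  qed
qed

theorem corollary1:
  fixes w :: "'n::finite \<Rightarrow> 'n set \<Rightarrow> real"
    and A :: "('n \<Rightarrow> real) \<Rightarrow> 'n set"
  shows "truthfully_implementable (add_val w) A \<longleftrightarrow> monotone_alloc A"
  using monotone_alloc_imp_truthfully_implementable truthfully_implementable_imp_monotone_alloc
  by blast

end
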